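(* Let $r\in\mathbb{N}\setminus\{0\}$ and \[ G=\left\langle a_1,\ldots,a_r,t_1,\ldots,t_r \;\middle|\; a_ia_j=a_ja_i,\ t_it_j=t_jt_i,\ t_i^2=1,\ t_i^{-1}a_jt_i=\begin{cases}a_j & i\neq j\\ a_i^{-1} & i=j\end{cases}\ (1\le i,j\le r)\right\rangle . \] Then $G$ is virtually abelian of rank $r$, its automorphic growth satisfies $\alpha_G\sim(n\mapsto n^r)$, and $[G,G]=\langle a_1^2,\ldots,a_r^2\rangle$.
   Context: For a finitely generated group $G$ with finite generating set $\Sigma$, the automorphic growth function sends $n$ to the number of $\operatorname{Aut}(G)$-orbits of $G$ containing an element of word length at most $n$; $\alpha_G$ denotes its class under $\sim$, where $f\sim g$ iff $f\preccurlyeq g$ and $g\preccurlyeq f$, and $f\preccurlyeq g$ means there is $\lambda\in\mathbb{N}\setminus\{0\}$ with $f(n)\le\lambda g(\lambda n+\lambda)+\lambda$ for all $n$. The rank of a virtually abelian group is the rank of a finite-index free abelian subgroup. *)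

theory Defs
  imports "HOL-Algebra.Algebra"
begin

text \<open>A letter is a generator together with a flag; flag True means the inverse of the generator.\<close>
type_synonym 'g word = "('g \<times> bool) list"

definition inv_letter :: "'g \<times> bool \<Rightarrow> 'g \<times> bool" where
  "inv_letter x = (fst x, \<not> snd x)"

definition words_on :: "'g set \<Rightarrow> 'g word set" where
  "words_on S = {w. \<forall>x\<in>set w. fst x \<in> S}"

inductive pres_eq :: "'g set \<Rightarrow> ('g word \<times> 'g word) set \<Rightarrow> 'g word \<Rightarrow> 'g word \<Rightarrow> bool"
  for S R where
  refl: "w \<in> words_on S \<Longrightarrow> pres_eq S R w w"
| sym: "pres_eq S R u v \<Longrightarrow> pres_eq S R v u"
| trans: "pres_eq S R u v \<Longrightarrow> pres_eq S R v w \<Longrightarrow> pres_eq S R u w"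
| cancel: "u \<in> words_on S \<Longrightarrow> v \<in> words_on S \<Longrightarrow> fst x \<in> S \<Longrightarrow>
      pres_eq S R (u @ [x, inv_letter x] @ v) (u @ v)"
| rel: "(l, r) \<in> R \<Longrightarrow> l \<in> words_on S \<Longrightarrow> r \<in> words_on S \<Longrightarrow>
      u \<in> words_on S \<Longrightarrow> v \<in> words_on S \<Longrightarrow> pres_eq S R (u @ l @ v) (u @ r @ v)"

definition presented_group :: "'g set \<Rightarrow> ('g word \<times> 'g word) set \<Rightarrow> 'g word set monoid" where
  "presented_group S R =
     \<lparr> carrier = (\<lambda>w. {v. pres_eq S R w v}) ` words_on S,
       monoid.mult = (\<lambda>A B. {w. \<exists>u\<in>A. \<exists>v\<in>B. pres_eq S R (u @ v) w}),
       one = {w. pres_eq S R [] w} \<rparr>"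

definition pres_gen :: "'g set \<Rightarrow> ('g word \<times> 'g word) set \<Rightarrow> 'g \<Rightarrow> 'g word set" where
  "pres_gen S R g = {w. pres_eq S R [(g, False)] w}"

text \<open>Generators: (False, i) is a_i and (True, i) is t_i, for 1 \<le> i \<le> r.\<close>
definition gens :: "nat \<Rightarrow> (bool \<times> nat) set" where
  "gens r = UNIV \<times> {1..r}"

definition la :: "nat \<Rightarrow> (bool \<times> nat) \<times> bool" where "la i = ((False, i), False)"
definition la_inv :: "nat \<Rightarrow> (bool \<times> nat) \<times> bool" where "la_inv i = ((False, i), True)"
definition lt :: "nat \<Rightarrow> (bool \<times> nat) \<times> bool" where "lt i = ((True, i), False)"
definition lt_inv :: "nat \<Rightarrow> (bool \<times> nat) \<times> bool" where "lt_inv i = ((True, i), True)"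

definition rels :: "nat \<Rightarrow> ((bool \<times> nat) word \<times> (bool \<times> nat) word) set" where
  "rels r =
     {([la i, la j], [la j, la i]) | i j. i \<in> {1..r} \<and> j \<in> {1..r}}
   \<union> {([lt i, lt j], [lt j, lt i]) | i j. i \<in> {1..r} \<and> j \<in> {1..r}}
   \<union> {([lt i, lt i], []) | i. i \<in> {1..r}}
   \<union> {([lt_inv i, la j, lt i], (if i \<noteq> j then [la j] else [la_inv i])) | i j.
        i \<in> {1..r} \<and> j \<in> {1..r}}"

definition Gr :: "nat \<Rightarrow> (bool \<times> nat) word set monoid" where
  "Gr r = presented_group (gens r) (rels r)"

definition gen_a :: "nat \<Rightarrow> nat \<Rightarrow> (bool \<times> nat) word set" where
  "gen_a r i = pres_gen (gens r) (rels r) (False, i)"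

definition word_length :: "('a, 'b) monoid_scheme \<Rightarrow> 'a set \<Rightarrow> 'a \<Rightarrow> nat" where
  "word_length G \<Sigma> g =
     (LEAST n. \<exists>xs. length xs = n \<and> set xs \<subseteq> \<Sigma> \<union> (m_inv G ` \<Sigma>) \<and>
                    foldr (\<lambda>x y. x \<otimes>\<^bsub>G\<^esub> y) xs \<one>\<^bsub>G\<^esub> = g)"

definition aut_orbit :: "('a, 'b) monoid_scheme \<Rightarrow> 'a \<Rightarrow> 'a set" where
  "aut_orbit G g = (\<lambda>\<phi>. \<phi> g) ` iso G G"

definition aut_growth :: "('a, 'b) monoid_scheme \<Rightarrow> 'a set \<Rightarrow> nat \<Rightarrow> nat" where
  "aut_growth G \<Sigma> n =
     card {aut_orbit G g | g. g \<in> carrier G \<and> word_length G \<Sigma> g \<le> n}"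

definition growth_le :: "(nat \<Rightarrow> nat) \<Rightarrow> (nat \<Rightarrow> nat) \<Rightarrow> bool" where
  "growth_le f g \<longleftrightarrow> (\<exists>c::nat. c > 0 \<and> (\<forall>n. f n \<le> c * g (c * n + c) + c))"

definition growth_equiv :: "(nat \<Rightarrow> nat) \<Rightarrow> (nat \<Rightarrow> nat) \<Rightarrow> bool" where
  "growth_equiv f g \<longleftrightarrow> growth_le f g \<and> growth_le g f"

definition virtually_abelian_rank :: "('a, 'b) monoid_scheme \<Rightarrow> nat \<Rightarrow> bool" where
  "virtually_abelian_rank G r \<longleftrightarrow>
     (\<exists>H. subgroup H G \<and> finite (rcosets\<^bsub>G\<^esub> H) \<and>
          G\<lparr>carrier := H\<rparr> \<cong> free_Abelian_group {..<r})"

end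

(* Sending a_i and t_i to the generators a, t of the i-th factor identifies G with the direct
   power of the infinite dihedral group D = <a, t | t^2, t a t = a^-1>: the relators hold in D^r,
   and conversely the relations bring every element of G into the normal form
   a_1^k_1 ... a_r^k_r t_1^e_1 ... t_r^e_r.
   The translations (all e_i = 0) form a subgroup isomorphic to Z^r of index 2^r.  Every
   commutator is a translation with even coordinates, and a_i^2 = [a_i, t_i], so [G, G] is
   generated by the a_i^2.
   A word of length n has coordinates of size O(n), so the n-ball, let alone the set of orbits
   meeting it, has O(n^r) elements.  Conversely, the nontrivial squares with at most two
   conjugates are exactly the nonzero powers of the a_i^2, so every automorphism maps a_i^2 to
   a_j^(+-2) with j = sigma i for a permutation sigma.  Hence the elements
   a_1^(2 k_1) ... a_r^(2 k_r) with k_i in the disjoint ranges [i (n+1), i (n+1) + n] lie in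
   pairwise distinct orbits; there are (n+1)^r of them, all of length O(n). *)

theory Submission
  imports Defs
begin

lemma words_on_Nil [simp]: "[] \<in> words_on S"
  by (simp add: words_on_def)

lemma words_on_Cons [simp]: "x # w \<in> words_on S \<longleftrightarrow> fst x \<in> S \<and> w \<in> words_on S"
  by (simp add: words_on_def)

lemma words_on_append [simp]: "u @ v \<in> words_on S \<longleftrightarrow> u \<in> words_on S \<and> v \<in> words_on S"
  by (auto simp: words_on_def)

lemma fst_inv_letter [simp]: "fst (inv_letter x) = fst x"
  by (simp add: inv_letter_def)

lemma pres_eq_words_on: "pres_eq S R u v \<Longrightarrow> u \<in> words_on S \<and> v \<in> words_on S"
  by (induction rule: pres_eq.induct) auto

lemma pres_eq_append_left:
  assumes "pres_eq S R u v" "w \<in> words_on S"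
  shows "pres_eq S R (w @ u) (w @ v)"
  using assms
proof (induction rule: pres_eq.induct)
  case (cancel u v x)
  then show ?case using pres_eq.cancel[of "w @ u" S v x R] by simp
next
  case (rel l r u v)
  then show ?case using pres_eq.rel[of l r R S "w @ u" v] by simp
qed (auto intro: pres_eq.intros)

lemma pres_eq_append_right:
  assumes "pres_eq S R u v" "w \<in> words_on S"
  shows "pres_eq S R (u @ w) (v @ w)"
  using assms
proof (induction rule: pres_eq.induct)
  case (cancel u v x)
  then show ?case using pres_eq.cancel[of u S "v @ w" x R] by simp
next
  case (rel l r u v)
  then show ?case using pres_eq.rel[of l r R S u "v @ w"] by simp
qed (auto intro: pres_eq.intros)

lemma pres_eq_append:
  assumes "pres_eq S R u u'" "pres_eq S R v v'"
  shows "pres_eq S R (u @ v) (u' @ v')"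
  using assms pres_eq_words_on
  by (blast intro: pres_eq.trans pres_eq_append_left pres_eq_append_right)

definition pres_class :: "'g set \<Rightarrow> ('g word \<times> 'g word) set \<Rightarrow> 'g word \<Rightarrow> 'g word set" where
  "pres_class S R w = {v. pres_eq S R w v}"

lemma pres_class_eq_iff:
  assumes "u \<in> words_on S"
  shows "pres_class S R u = pres_class S R v \<longleftrightarrow> pres_eq S R u v"
  using assms unfolding pres_class_def
  by (blast intro: pres_eq.refl pres_eq.sym pres_eq.trans)

lemma carrier_presented_group: "carrier (presented_group S R) = pres_class S R ` words_on S"
  by (simp add: presented_group_def pres_class_def[abs_def])

lemma one_presented_group: "\<one>\<^bsub>presented_group S R\<^esub> = pres_class S R []"
  by (simp add: presented_group_def pres_class_def)

lemma mult_presented_group: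
  assumes "u \<in> words_on S" "v \<in> words_on S"
  shows "pres_class S R u \<otimes>\<^bsub>presented_group S R\<^esub> pres_class S R v = pres_class S R (u @ v)"
proof -
  have "{w. \<exists>u'\<in>pres_class S R u. \<exists>v'\<in>pres_class S R v. pres_eq S R (u' @ v') w}
      = pres_class S R (u @ v)"
    using assms unfolding pres_class_def
    by (blast intro: pres_eq.refl pres_eq.trans pres_eq_append)
  then show ?thesis by (simp add: presented_group_def)
qed

definition inv_word :: "'g word \<Rightarrow> 'g word" where
  "inv_word w = rev (map inv_letter w)"

lemma inv_word_words_on [simp]: "inv_word w \<in> words_on S \<longleftrightarrow> w \<in> words_on S"
  by (auto simp: inv_word_def words_on_def)

lemma pres_eq_inv_word_append: "w \<in> words_on S \<Longrightarrow> pres_eq S R (inv_word w @ w) []"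
proof (induction w)
  case Nil
  then show ?case by (simp add: inv_word_def pres_eq.refl)
next
  case (Cons x w)
  have "pres_eq S R (inv_word w @ [inv_letter x, inv_letter (inv_letter x)] @ w) (inv_word w @ w)"
    using Cons.prems by (intro pres_eq.cancel) auto
  then have "pres_eq S R (inv_word (x # w) @ x # w) (inv_word w @ w)"
    by (simp add: inv_word_def inv_letter_def)
  then show ?case
    using Cons by (auto intro: pres_eq.trans)
qed

lemma group_presented_group: "group (presented_group S R)"
proof (rule groupI)
  fix x
  assume "x \<in> carrier (presented_group S R)"
  then obtain w where "w \<in> words_on S" "x = pres_class S R w"
    by (auto simp: carrier_presented_group)
  then show "\<exists>y\<in>carrier (presented_group S R). y \<otimes>\<^bsub>presented_group S R\<^esub> x = \<one>\<^bsub>presented_group S R\<^esub>"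
    by (intro bexI[of _ "pres_class S R (inv_word w)"])
      (auto simp: carrier_presented_group mult_presented_group one_presented_group
        pres_class_eq_iff pres_eq_inv_word_append)
qed (auto simp: carrier_presented_group mult_presented_group one_presented_group)

section \<open>Products of lists and von Dyck's theorem\<close>

definition listprod :: "('a, 'b) monoid_scheme \<Rightarrow> 'a list \<Rightarrow> 'a" where
  "listprod G xs = foldr (\<lambda>x y. x \<otimes>\<^bsub>G\<^esub> y) xs \<one>\<^bsub>G\<^esub>"

lemma listprod_Nil [simp]: "listprod G [] = \<one>\<^bsub>G\<^esub>"
  by (simp add: listprod_def)

lemma listprod_Cons [simp]: "listprod G (x # xs) = x \<otimes>\<^bsub>G\<^esub> listprod G xs"
  by (simp add: listprod_def)

context monoid
begin

lemma listprod_closed [intro, simp]: "set xs \<subseteq> carrier G \<Longrightarrow> listprod G xs \<in> carrier G"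
  by (induction xs) auto

lemma listprod_append:
  "set xs \<subseteq> carrier G \<Longrightarrow> set ys \<subseteq> carrier G \<Longrightarrow> listprod G (xs @ ys) = listprod G xs \<otimes> listprod G ys"
  by (induction xs) (auto simp: m_assoc)

lemma listprod_concat:
  "(\<And>xs. xs \<in> set xss \<Longrightarrow> set xs \<subseteq> carrier G) \<Longrightarrow> listprod G (concat xss) = listprod G (map (listprod G) xss)"
  by (induction xss) (simp_all add: listprod_append UN_subset_iff)

lemma listprod_replicate: "x \<in> carrier G \<Longrightarrow> listprod G (replicate n x) = x [^] n"
  by (induction n) (simp_all add: nat_pow_Suc2[symmetric])

end

lemma (in group_hom) hom_listprod:
  "set xs \<subseteq> carrier G \<Longrightarrow> h (listprod G xs) = listprod H (map h xs)"
  by (induction xs) auto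

definition presented_lift :: "('a, 'b) monoid_scheme \<Rightarrow> ('g \<times> bool \<Rightarrow> 'a) \<Rightarrow> 'g word set \<Rightarrow> 'a" where
  "presented_lift G f A = listprod G (map f (SOME w. w \<in> A))"

locale presentation_map = group G for G (structure) +
  fixes S :: "'g set" and R :: "('g word \<times> 'g word) set" and f :: "'g \<times> bool \<Rightarrow> 'a"
  assumes letter_closed: "fst x \<in> S \<Longrightarrow> f x \<in> carrier G"
    and letter_inv: "fst x \<in> S \<Longrightarrow> f x \<otimes> f (inv_letter x) = \<one>"
    and relator: "(l, r) \<in> R \<Longrightarrow> l \<in> words_on S \<Longrightarrow> r \<in> words_on S \<Longrightarrow>
      listprod G (map f l) = listprod G (map f r)"
begin

lemma word_closed: "w \<in> words_on S \<Longrightarrow> f ` set w \<subseteq> carrier G"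
  by (auto simp: words_on_def letter_closed)

lemma pres_eq_listprod: "pres_eq S R u v \<Longrightarrow> listprod G (map f u) = listprod G (map f v)"
proof (induction rule: pres_eq.induct)
  case (cancel u v x)
  have "listprod G (map f (u @ [x, inv_letter x] @ v))
      = listprod G (map f u) \<otimes> (f x \<otimes> f (inv_letter x) \<otimes> listprod G (map f v))"
    using cancel by (simp add: listprod_append word_closed letter_closed m_assoc)
  with cancel show ?case
    by (simp add: listprod_append word_closed letter_inv)
next
  case (rel l r u v)
  then show ?case
    by (simp add: listprod_append word_closed relator)
qed auto

lemma presented_lift_class:
  assumes "w \<in> words_on S"
  shows "presented_lift G f (pres_class S R w) = listprod G (map f w)"
proof -
  have "w \<in> pres_class S R w"
    using assms by (simp add: pres_class_def pres_eq.refl)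
  then have "(SOME v. v \<in> pres_class S R w) \<in> pres_class S R w"
    by (rule someI)
  then have "pres_eq S R w (SOME v. v \<in> pres_class S R w)"
    by (simp add: pres_class_def)
  then show ?thesis
    unfolding presented_lift_def by (simp add: pres_eq_listprod)
qed

lemma presented_lift_hom: "presented_lift G f \<in> hom (presented_group S R) G"
  by (rule homI)
    (auto simp: carrier_presented_group mult_presented_group presented_lift_class
      listprod_append word_closed)

end

lemma (in group) conj_int_pow:
  assumes "x \<in> carrier G" "y \<in> carrier G"
  shows "x \<otimes> y [^] (z::int) \<otimes> inv x = (x \<otimes> y \<otimes> inv x) [^] z"
proof -
  interpret conj: group_hom G G "\<lambda>y. x \<otimes> y \<otimes> inv x"
    using assms by unfold_locales (auto simp: hom_def m_assoc inv_solve_left)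
  show ?thesis
    using assms by (simp add: conj.hom_int_pow)
qed

lemma (in group) int_pow_commute:
  assumes "x \<in> carrier G" "y \<in> carrier G" "x \<otimes> y = y \<otimes> x"
  shows "x [^] (m::int) \<otimes> y [^] (n::int) = y [^] n \<otimes> x [^] m"
proof -
  have commute_pow: "u \<otimes> v [^] (k::int) = v [^] k \<otimes> u"
    if "u \<in> carrier G" "v \<in> carrier G" "u \<otimes> v = v \<otimes> u" for u v k
  proof -
    have "u \<otimes> v \<otimes> inv u = v"
      using that by (simp add: inv_solve_right')
    then have "u \<otimes> v [^] k \<otimes> inv u = v [^] k"
      using that by (simp add: conj_int_pow)
    then show ?thesis
      using that by (simp add: inv_solve_right')
  qed
  have "y \<otimes> x [^] m = x [^] m \<otimes> y"
    using assms by (intro commute_pow) auto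
  then show ?thesis
    using assms by (intro commute_pow) auto
qed

definition at_most_two_conjugates :: "('a, 'b) monoid_scheme \<Rightarrow> 'a \<Rightarrow> bool" where
  "at_most_two_conjugates G x \<longleftrightarrow> (\<forall>g\<in>carrier G. \<forall>h\<in>carrier G.
     g \<otimes>\<^bsub>G\<^esub> x \<otimes>\<^bsub>G\<^esub> inv\<^bsub>G\<^esub> g = x \<or> h \<otimes>\<^bsub>G\<^esub> x \<otimes>\<^bsub>G\<^esub> inv\<^bsub>G\<^esub> h = x \<or>
     g \<otimes>\<^bsub>G\<^esub> x \<otimes>\<^bsub>G\<^esub> inv\<^bsub>G\<^esub> g = h \<otimes>\<^bsub>G\<^esub> x \<otimes>\<^bsub>G\<^esub> inv\<^bsub>G\<^esub> h)"

lemma iso_at_most_two_conjugates: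
  assumes "group G" "group H" "\<phi> \<in> iso G H" "x \<in> carrier G" "at_most_two_conjugates G x"
  shows "at_most_two_conjugates H (\<phi> x)"
  unfolding at_most_two_conjugates_def
proof (intro ballI)
  interpret group_hom G H \<phi>
    using assms(1-3) by (intro group_hom.intro group_hom_axioms.intro) (simp_all add: iso_iff)
  fix g' h'
  assume "g' \<in> carrier H" "h' \<in> carrier H"
  moreover have "\<phi> ` carrier G = carrier H"
    using assms(3) by (simp add: iso_def bij_betw_def)
  ultimately obtain g h where gh: "g \<in> carrier G" "h \<in> carrier G" "g' = \<phi> g" "h' = \<phi> h"
    by (metis imageE)
  have "inj_on \<phi> (carrier G)"
    using assms(3) by (simp add: iso_def bij_betw_def)
  then have "\<phi> (g \<otimes>\<^bsub>G\<^esub> x \<otimes>\<^bsub>G\<^esub> inv\<^bsub>G\<^esub> g) = \<phi> y \<longleftrightarrow> g \<otimes>\<^bsub>G\<^esub> x \<otimes>\<^bsub>G\<^esub> inv\<^bsub>G\<^esub> g = y"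
    if "g \<in> carrier G" "y \<in> carrier G" for g y
    using that assms(4) by (intro inj_on_eq_iff) simp_all
  then show "g' \<otimes>\<^bsub>H\<^esub> \<phi> x \<otimes>\<^bsub>H\<^esub> inv\<^bsub>H\<^esub> g' = \<phi> x \<or> h' \<otimes>\<^bsub>H\<^esub> \<phi> x \<otimes>\<^bsub>H\<^esub> inv\<^bsub>H\<^esub> h' = \<phi> x \<or>
      g' \<otimes>\<^bsub>H\<^esub> \<phi> x \<otimes>\<^bsub>H\<^esub> inv\<^bsub>H\<^esub> g' = h' \<otimes>\<^bsub>H\<^esub> \<phi> x \<otimes>\<^bsub>H\<^esub> inv\<^bsub>H\<^esub> h'"
    using assms(5) gh assms(4) unfolding at_most_two_conjugates_def
    by (simp flip: hom_mult hom_inv) blast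
qed

lemma word_length_listprod:
  "word_length G S g = (LEAST n. \<exists>xs. length xs = n \<and> set xs \<subseteq> S \<union> m_inv G ` S \<and> listprod G xs = g)"
  by (simp add: word_length_def listprod_def)

lemma word_length_le:
  "set xs \<subseteq> S \<union> m_inv G ` S \<Longrightarrow> listprod G xs = g \<Longrightarrow> word_length G S g \<le> length xs"
  unfolding word_length_listprod by (rule Least_le) blast

lemma (in group) generate_listprod:
  assumes "S \<subseteq> carrier G" "g \<in> generate G S"
  shows "\<exists>xs. set xs \<subseteq> S \<union> m_inv G ` S \<and> listprod G xs = g"
  using assms(2)
proof (induction rule: generate.induct)
  case one
  show ?case by (intro exI[of _ "[]"]) simp
next
  case (incl h)
  then show ?case using assms(1) by (intro exI[of _ "[h]"]) auto
next
  case (inv h)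
  then show ?case using assms(1) by (intro exI[of _ "[inv h]"]) auto
next
  case (eng h1 h2)
  then obtain xs ys where "set xs \<subseteq> S \<union> m_inv G ` S" "listprod G xs = h1"
    and "set ys \<subseteq> S \<union> m_inv G ` S" "listprod G ys = h2"
    by blast
  moreover have "S \<union> m_inv G ` S \<subseteq> carrier G"
    using assms(1) by auto
  ultimately show ?case
    by (intro exI[of _ "xs @ ys"]) (auto simp: listprod_append[of xs ys] subset_trans)
qed

lemma (in group) word_length_witness:
  assumes "S \<subseteq> carrier G" "g \<in> generate G S"
  obtains xs where "length xs = word_length G S g" "set xs \<subseteq> S \<union> m_inv G ` S" "listprod G xs = g"
proof -
  have "\<exists>xs. length xs = word_length G S g \<and> set xs \<subseteq> S \<union> m_inv G ` S \<and> listprod G xs = g"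
    unfolding word_length_listprod by (rule LeastI_ex) (use generate_listprod[OF assms] in blast)
  then show ?thesis
    using that by blast
qed

lemma aut_orbit_eqD:
  assumes "aut_orbit G x = aut_orbit G y"
  shows "\<exists>\<phi>\<in>iso G G. \<phi> x = y"
proof -
  have "y \<in> aut_orbit G y"
    unfolding aut_orbit_def using iso_set_refl by force
  then have "y \<in> aut_orbit G x"
    using assms by simp
  then show ?thesis
    by (auto simp: aut_orbit_def)
qed

lemma aut_growth_eq_card_image:
  "aut_growth G S n = card (aut_orbit G ` {g \<in> carrier G. word_length G S g \<le> n})"
  unfolding aut_growth_def by (rule arg_cong[of _ _ card]) blast

lemma aut_growth_le_card_ball:
  "finite {g \<in> carrier G. word_length G S g \<le> n} \<Longrightarrow>
    aut_growth G S n \<le> card {g \<in> carrier G. word_length G S g \<le> n}"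
  unfolding aut_growth_eq_card_image by (rule card_image_le)

lemma card_le_aut_growth:
  assumes "finite {g \<in> carrier G. word_length G S g \<le> n}"
    and "f ` A \<subseteq> {g \<in> carrier G. word_length G S g \<le> n}" "inj_on (\<lambda>a. aut_orbit G (f a)) A"
  shows "card A \<le> aut_growth G S n"
proof -
  have "card A = card ((\<lambda>a. aut_orbit G (f a)) ` A)"
    using assms(3) by (rule card_image[symmetric])
  also have "\<dots> \<le> aut_growth G S n"
    unfolding aut_growth_eq_card_image using assms(1,2) by (intro card_mono) auto
  finally show ?thesis .
qed

lemma growth_le_powerI:
  assumes "\<And>n. f n \<le> C * (n + 1) ^ r"
  shows "growth_le f (\<lambda>n. n ^ r)"
  unfolding growth_le_def
proof (intro exI conjI allI)
  fix n
  have "f n \<le> C * (n + 1) ^ r"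
    by (rule assms)
  also have "\<dots> \<le> (C + 1) * ((C + 1) * n + (C + 1)) ^ r"
    by (intro mult_mono power_mono) (auto simp: algebra_simps)
  finally show "f n \<le> (C + 1) * ((C + 1) * n + (C + 1)) ^ r + (C + 1)"
    by simp
qed simp

lemma power_growth_leI:
  assumes "c > 0" "\<And>n. (n + 1) ^ r \<le> f (c * n + c)"
  shows "growth_le (\<lambda>n. n ^ r) f"
proof -
  have "n ^ r \<le> c * f (c * n + c) + c" for n
  proof -
    have "n ^ r \<le> (n + 1) ^ r"
      by (simp add: power_mono)
    also have "\<dots> \<le> f (c * n + c)"
      by (rule assms(2))
    also have "\<dots> \<le> c * f (c * n + c)"
      using assms(1) by simp
    finally show ?thesis
      by simp
  qed
  then show ?thesis
    unfolding growth_le_def using assms(1) by blast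
qed

lemma div_eq_of_mem_block: "k \<in> {i * (n + 1) .. i * (n + 1) + n} \<Longrightarrow> k div (n + 1) = (i::nat)"
  by (rule div_nat_eqI) (auto simp: algebra_simps)

section \<open>The direct power of the infinite dihedral group\<close>

type_synonym dinf_vec = "(nat \<Rightarrow> int) \<times> (nat \<Rightarrow> bool)"

text \<open>The pair \<open>(k, e)\<close> stands for the tuple whose \<open>i\<close>-th entry, for \<open>1 \<le> i \<le> r\<close>, is
  \<open>a^(k i) t^(e i)\<close> in the infinite dihedral group \<open>\<langle>a, t | t^2, t a t = a^-1\<rangle>\<close>.\<close>

definition dinf_power :: "nat \<Rightarrow> dinf_vec monoid" where
  "dinf_power r =
     \<lparr>carrier = {p. \<forall>i. i \<notin> {1..r} \<longrightarrow> fst p i = 0 \<and> \<not> snd p i},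
      monoid.mult = (\<lambda>p q. (\<lambda>i. fst p i + (if snd p i then - fst q i else fst q i),
                           \<lambda>i. snd p i \<noteq> snd q i)),
      one = (\<lambda>_. 0, \<lambda>_. False)\<rparr>"

lemma carrier_dinf_power:
  "p \<in> carrier (dinf_power r) \<longleftrightarrow> (\<forall>i. i \<notin> {1..r} \<longrightarrow> fst p i = 0 \<and> \<not> snd p i)"
  by (simp add: dinf_power_def)

lemma dinf_power_simps [simp]:
  "p \<otimes>\<^bsub>dinf_power r\<^esub> q =
     (\<lambda>i. fst p i + (if snd p i then - fst q i else fst q i), \<lambda>i. snd p i \<noteq> snd q i)"
  "\<one>\<^bsub>dinf_power r\<^esub> = (\<lambda>_. 0, \<lambda>_. False)"
  by (simp_all add: dinf_power_def)

lemma group_dinf_power: "group (dinf_power r)"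
proof (rule groupI)
  fix p
  assume "p \<in> carrier (dinf_power r)"
  then show "\<exists>q\<in>carrier (dinf_power r). q \<otimes>\<^bsub>dinf_power r\<^esub> p = \<one>\<^bsub>dinf_power r\<^esub>"
    by (intro bexI[of _ "(\<lambda>i. if snd p i then fst p i else - fst p i, snd p)"])
      (auto simp: carrier_dinf_power)
qed (auto simp: carrier_dinf_power fun_eq_iff)

lemma inv_dinf_power:
  assumes "p \<in> carrier (dinf_power r)"
  shows "inv\<^bsub>dinf_power r\<^esub> p = (\<lambda>i. if snd p i then fst p i else - fst p i, snd p)"
  using assms by (intro group.inv_equality[OF group_dinf_power]) (auto simp: carrier_dinf_power fun_eq_iff)

lemma nat_pow_dinf_power_translation:
  "(k, \<lambda>_. False) [^]\<^bsub>dinf_power r\<^esub> (n::nat) = (\<lambda>i. int n * k i, \<lambda>_. False)"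
  by (induction n) (auto simp: fun_eq_iff algebra_simps)

lemma int_pow_dinf_power_translation:
  assumes "(k, \<lambda>_. False) \<in> carrier (dinf_power r)"
  shows "(k, \<lambda>_. False) [^]\<^bsub>dinf_power r\<^esub> (z::int) = (\<lambda>i. z * k i, \<lambda>_. False)"
  using assms
  by (simp add: int_pow_def2 nat_pow_dinf_power_translation inv_dinf_power carrier_dinf_power fun_eq_iff)

lemma commutator_dinf_power:
  assumes "p \<in> carrier (dinf_power r)" "q \<in> carrier (dinf_power r)"
  shows "p \<otimes>\<^bsub>dinf_power r\<^esub> q \<otimes>\<^bsub>dinf_power r\<^esub> inv\<^bsub>dinf_power r\<^esub> p \<otimes>\<^bsub>dinf_power r\<^esub> inv\<^bsub>dinf_power r\<^esub> q
    = (\<lambda>i. 2 * ((if snd q i then fst p i else 0) - (if snd p i then fst q i else 0)), \<lambda>_. False)"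
  using assms by (auto simp: inv_dinf_power fun_eq_iff)

definition dinf_box :: "nat \<Rightarrow> nat \<Rightarrow> dinf_vec set" where
  "dinf_box r m = {p \<in> carrier (dinf_power r). \<forall>i. \<bar>fst p i\<bar> \<le> int m}"

lemma finite_card_dinf_box:
  "finite (dinf_box r m) \<and> card (dinf_box r m) \<le> (2 * m + 1) ^ r * 2 ^ r"
proof -
  let ?A = "Pi\<^sub>E {1..r} (\<lambda>_. {- int m..int m}) \<times> Pi\<^sub>E {1..r} (\<lambda>_. UNIV :: bool set)"
  let ?extend = "\<lambda>(k, e). ((\<lambda>i. if i \<in> {1..r} then k i else 0) :: nat \<Rightarrow> int,
                            \<lambda>i. if i \<in> {1..r} then e i else False)"
  have box: "dinf_box r m \<subseteq> ?extend ` ?A"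
  proof
    fix p
    assume p: "p \<in> dinf_box r m"
    then have "?extend (restrict (fst p) {1..r}, restrict (snd p) {1..r}) = p"
      by (auto simp: dinf_box_def carrier_dinf_power prod_eq_iff fun_eq_iff)
    moreover have "(restrict (fst p) {1..r}, restrict (snd p) {1..r}) \<in> ?A"
      using p by (auto simp: dinf_box_def abs_le_iff minus_le_iff)
    ultimately show "p \<in> ?extend ` ?A"
      by (rule image_eqI[OF HOL.sym])
  qed
  have A: "finite ?A"
    by (intro finite_cartesian_product finite_PiE) simp_all
  have "card (dinf_box r m) \<le> card ?A"
    using card_mono[OF finite_imageI[OF A] box] card_image_le[OF A, of ?extend] by linarith
  also have "card ?A = (2 * m + 1) ^ r * 2 ^ r"
    by (simp add: card_cartesian_product card_PiE nat_add_distrib nat_mult_distrib)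
  finally show ?thesis
    using finite_subset[OF box finite_imageI[OF A]] by simp
qed

lemma finite_dinf_box [simp]: "finite (dinf_box r m)"
  using finite_card_dinf_box by blast

lemma card_dinf_box_le: "card (dinf_box r m) \<le> (2 * m + 1) ^ r * 2 ^ r"
  using finite_card_dinf_box by blast

definition gen_t :: "nat \<Rightarrow> nat \<Rightarrow> (bool \<times> nat) word set" where
  "gen_t r i = pres_gen (gens r) (rels r) (True, i)"

definition letter_coord :: "(bool \<times> nat) \<times> bool \<Rightarrow> dinf_vec" where
  "letter_coord x = (case x of
      ((False, i), b) \<Rightarrow> (\<lambda>j. if j = i then (if b then -1 else 1) else 0, \<lambda>_. False)
    | ((True, i), _) \<Rightarrow> (\<lambda>_. 0, \<lambda>j. j = i))"

definition coord :: "nat \<Rightarrow> (bool \<times> nat) word set \<Rightarrow> dinf_vec" where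
  "coord r = presented_lift (dinf_power r) letter_coord"

lemma gens_iff [simp]: "(b, i) \<in> gens r \<longleftrightarrow> i \<in> {1..r}"
  by (simp add: gens_def)

lemma fst_letters [simp]:
  "fst (la i) = (False, i)" "fst (la_inv i) = (False, i)" "fst (lt i) = (True, i)" "fst (lt_inv i) = (True, i)"
  by (simp_all add: la_def la_inv_def lt_def lt_inv_def)

lemma inv_letter_letters [simp]: "inv_letter (la i) = la_inv i" "inv_letter (lt i) = lt_inv i"
  by (simp_all add: inv_letter_def la_def la_inv_def lt_def lt_inv_def)

lemma presentation_map_letter_coord: "presentation_map (dinf_power r) (gens r) (rels r) letter_coord"
proof (intro presentation_map.intro presentation_map_axioms.intro group_dinf_power)
  fix x :: "(bool \<times> nat) \<times> bool"
  assume "fst x \<in> gens r"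
  then show "letter_coord x \<in> carrier (dinf_power r)"
    and "letter_coord x \<otimes>\<^bsub>dinf_power r\<^esub> letter_coord (inv_letter x) = \<one>\<^bsub>dinf_power r\<^esub>"
    by (auto simp: letter_coord_def inv_letter_def carrier_dinf_power fun_eq_iff
        split: prod.splits bool.splits)
next
  fix l l'
  assume "(l, l') \<in> rels r"
  then show "listprod (dinf_power r) (map letter_coord l) = listprod (dinf_power r) (map letter_coord l')"
    by (auto simp: rels_def letter_coord_def la_def la_inv_def lt_def lt_inv_def fun_eq_iff)
qed

text \<open>The group is a parameter only so that it can serve as the implicit structure.\<close>

locale Gr_group = group G for G :: "(bool \<times> nat) word set monoid" (structure) +
  fixes r :: nat
  assumes G_eq: "G = Gr r"
begin

sublocale coord_pres: presentation_map "dinf_power r" "gens r" "rels r" letter_coord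
  by (rule presentation_map_letter_coord)

abbreviation cl :: "(bool \<times> nat) word \<Rightarrow> (bool \<times> nat) word set" where
  "cl \<equiv> pres_class (gens r) (rels r)"

lemma carrier_eq: "carrier G = cl ` words_on (gens r)"
  by (simp add: G_eq Gr_def carrier_presented_group)

lemma class_closed [simp]: "w \<in> words_on (gens r) \<Longrightarrow> cl w \<in> carrier G"
  by (simp add: carrier_eq)

lemma class_Nil: "cl [] = \<one>"
  by (simp add: G_eq Gr_def one_presented_group)

lemma class_append: "u \<in> words_on (gens r) \<Longrightarrow> v \<in> words_on (gens r) \<Longrightarrow> cl (u @ v) = cl u \<otimes> cl v"
  by (simp add: G_eq Gr_def mult_presented_group)

lemma class_Cons:
  "fst x \<in> gens r \<Longrightarrow> y # w \<in> words_on (gens r) \<Longrightarrow> cl (x # y # w) = cl [x] \<otimes> cl (y # w)"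
  using class_append[of "[x]" "y # w"] by simp

lemma class_inv_letter: "fst x \<in> gens r \<Longrightarrow> cl [inv_letter x] = inv (cl [x])"
proof -
  assume x: "fst x \<in> gens r"
  have "pres_eq (gens r) (rels r) ([] @ [x, inv_letter x] @ []) ([] @ [])"
    using x by (intro pres_eq.cancel) auto
  then have "cl [x] \<otimes> cl [inv_letter x] = \<one>"
    using x by (simp add: class_Cons class_Nil pres_class_eq_iff[symmetric])
  moreover have "cl [x] \<in> carrier G" "cl [inv_letter x] \<in> carrier G"
    using x by simp_all
  ultimately show ?thesis
    by (metis inv_comm inv_equality)
qed

lemma class_relator:
  assumes "(l, l') \<in> rels r" "l \<in> words_on (gens r)" "l' \<in> words_on (gens r)"
  shows "cl l = cl l'"
  using pres_eq.rel[OF assms, of "[]" "[]"] assms(2) by (simp add: pres_class_eq_iff)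

lemma class_la: "cl [la i] = gen_a r i"
  by (simp add: gen_a_def pres_gen_def pres_class_def la_def)

lemma class_lt: "cl [lt i] = gen_t r i"
  by (simp add: gen_t_def pres_gen_def pres_class_def lt_def)

lemma class_la_inv: "i \<in> {1..r} \<Longrightarrow> cl [la_inv i] = inv gen_a r i"
  using class_inv_letter[of "la i"] by (simp add: class_la)

lemma class_lt_inv: "i \<in> {1..r} \<Longrightarrow> cl [lt_inv i] = inv gen_t r i"
  using class_inv_letter[of "lt i"] by (simp add: class_lt)

lemma gen_a_closed [simp]: "i \<in> {1..r} \<Longrightarrow> gen_a r i \<in> carrier G"
  using class_closed[of "[la i]"] by (simp add: class_la)

lemma gen_t_closed [simp]: "i \<in> {1..r} \<Longrightarrow> gen_t r i \<in> carrier G"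
  using class_closed[of "[lt i]"] by (simp add: class_lt)

lemma gen_a_commute:
  assumes "i \<in> {1..r}" "j \<in> {1..r}"
  shows "gen_a r i \<otimes> gen_a r j = gen_a r j \<otimes> gen_a r i"
proof -
  have "cl [la i, la j] = cl [la j, la i]"
    using assms by (intro class_relator) (auto simp: rels_def)
  then show ?thesis
    using assms by (simp add: class_Cons class_la)
qed

lemma gen_t_commute:
  assumes "i \<in> {1..r}" "j \<in> {1..r}"
  shows "gen_t r i \<otimes> gen_t r j = gen_t r j \<otimes> gen_t r i"
proof -
  have "cl [lt i, lt j] = cl [lt j, lt i]"
    using assms by (intro class_relator) (auto simp: rels_def)
  then show ?thesis
    using assms by (simp add: class_Cons class_lt)
qed

lemma gen_t_square: "i \<in> {1..r} \<Longrightarrow> gen_t r i \<otimes> gen_t r i = \<one>"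
proof -
  assume i: "i \<in> {1..r}"
  have "cl [lt i, lt i] = cl []"
    using i by (intro class_relator) (auto simp: rels_def)
  then show ?thesis
    using i by (simp add: class_Cons class_lt class_Nil)
qed

lemma inv_gen_t [simp]: "i \<in> {1..r} \<Longrightarrow> inv gen_t r i = gen_t r i"
  by (simp add: gen_t_square inv_equality)

lemma gen_t_conj_gen_a:
  assumes "i \<in> {1..r}" "j \<in> {1..r}"
  shows "gen_t r i \<otimes> gen_a r j \<otimes> inv gen_t r i = (if i = j then inv gen_a r j else gen_a r j)"
proof -
  have "cl [lt_inv i, la j, lt i] = cl (if i \<noteq> j then [la j] else [la_inv i])"
    using assms by (intro class_relator) (auto simp: rels_def)
  then show ?thesis
    using assms by (simp add: class_Cons class_la class_lt class_la_inv class_lt_inv m_assoc split: if_splits)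
qed

lemma gen_t_mult_gen_a_pow:
  assumes "i \<in> {1..r}" "j \<in> {1..r}"
  shows "gen_t r i \<otimes> gen_a r j [^] (z::int) = gen_a r j [^] (if i = j then - z else z) \<otimes> gen_t r i"
proof -
  have "gen_t r i \<otimes> gen_a r j [^] z \<otimes> inv gen_t r i = gen_a r j [^] (if i = j then - z else z)"
    using assms by (simp add: conj_int_pow gen_t_conj_gen_a int_pow_inv int_pow_neg del: inv_gen_t)
  then show ?thesis
    using assms by (simp add: inv_solve_right' del: inv_gen_t)
qed

lemma class_letter:
  assumes "fst x \<in> gens r"
  shows "cl [x] = (case x of ((False, i), b) \<Rightarrow> gen_a r i [^] (if b then -1 else 1 :: int)
                          | ((True, i), _) \<Rightarrow> gen_t r i)"
proof -
  obtain b i c where x: "x = ((b, i), c)" by (metis prod.collapse)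
  then have i: "i \<in> {1..r}" using assms by simp
  show ?thesis
    using class_la[of i] class_la_inv[OF i] class_lt[of i] class_lt_inv[OF i] i
    by (cases b; cases c) (simp_all add: x la_def la_inv_def lt_def lt_inv_def int_pow_neg)
qed

section \<open>Normal forms and the coordinate isomorphism\<close>

definition gen_indices :: "nat list" where
  "gen_indices = [1..<Suc r]"

lemma set_gen_indices [simp]: "set gen_indices = {1..r}"
  by (auto simp: gen_indices_def)

lemma distinct_gen_indices [simp]: "distinct gen_indices"
  by (simp add: gen_indices_def)

definition a_prod :: "nat list \<Rightarrow> (nat \<Rightarrow> int) \<Rightarrow> (bool \<times> nat) word set" where
  "a_prod l k = listprod G (map (\<lambda>i. gen_a r i [^] k i) l)"

definition t_prod :: "nat list \<Rightarrow> (nat \<Rightarrow> bool) \<Rightarrow> (bool \<times> nat) word set" where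
  "t_prod l e = listprod G (map (\<lambda>i. if e i then gen_t r i else \<one>) l)"

definition normal_form :: "dinf_vec \<Rightarrow> (bool \<times> nat) word set" where
  "normal_form p = a_prod gen_indices (fst p) \<otimes> t_prod gen_indices (snd p)"

lemma a_prod_Nil [simp]: "a_prod [] k = \<one>"
  by (simp add: a_prod_def)

lemma t_prod_Nil [simp]: "t_prod [] e = \<one>"
  by (simp add: t_prod_def)

lemma a_prod_Cons [simp]: "a_prod (i # l) k = gen_a r i [^] k i \<otimes> a_prod l k"
  by (simp add: a_prod_def)

lemma t_prod_Cons [simp]: "t_prod (i # l) e = (if e i then gen_t r i else \<one>) \<otimes> t_prod l e"
  by (simp add: t_prod_def)

lemma a_prod_closed [simp]: "set l \<subseteq> {1..r} \<Longrightarrow> a_prod l k \<in> carrier G"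
  by (induction l) (auto simp: a_prod_def)

lemma t_prod_closed [simp]: "set l \<subseteq> {1..r} \<Longrightarrow> t_prod l e \<in> carrier G"
  by (induction l) (auto simp: t_prod_def)

lemma normal_form_closed [simp]: "normal_form p \<in> carrier G"
  by (simp add: normal_form_def)

lemma a_prod_cong: "(\<And>j. j \<in> set l \<Longrightarrow> k j = k' j) \<Longrightarrow> a_prod l k = a_prod l k'"
  by (induction l) (auto simp: a_prod_def)

lemma t_prod_cong: "(\<And>j. j \<in> set l \<Longrightarrow> e j = e' j) \<Longrightarrow> t_prod l e = t_prod l e'"
  by (induction l) (auto simp: t_prod_def)

lemma gen_a_pow_mult_a_prod:
  assumes "i \<in> set l" "distinct l" "set l \<subseteq> {1..r}"
  shows "gen_a r i [^] z \<otimes> a_prod l k = a_prod l (\<lambda>j. if j = i then z + k j else k j)"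
  using assms
proof (induction l)
  case (Cons j l)
  show ?case
  proof (cases "j = i")
    case True
    with Cons.prems have "i \<notin> set l" "i \<in> {1..r}" "set l \<subseteq> {1..r}" by auto
    moreover from \<open>i \<notin> set l\<close> have "a_prod l (\<lambda>j. if j = i then z + k j else k j) = a_prod l k"
      by (intro a_prod_cong) auto
    ultimately show ?thesis
      using True by (simp add: int_pow_mult m_assoc)
  next
    case False
    with Cons.prems have ij: "i \<in> {1..r}" "j \<in> {1..r}" "set l \<subseteq> {1..r}" by auto
    then have "gen_a r i [^] z \<otimes> gen_a r j [^] k j = gen_a r j [^] k j \<otimes> gen_a r i [^] z"
      by (simp add: int_pow_commute gen_a_commute)
    then have "gen_a r i [^] z \<otimes> a_prod (j # l) k = gen_a r j [^] k j \<otimes> (gen_a r i [^] z \<otimes> a_prod l k)"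
      using ij by (simp flip: m_assoc)
    with Cons False show ?thesis
      by simp
  qed
qed simp

lemma gen_t_mult_a_prod:
  assumes "i \<in> {1..r}" "set l \<subseteq> {1..r}"
  shows "gen_t r i \<otimes> a_prod l k = a_prod l (\<lambda>j. if j = i then - k j else k j) \<otimes> gen_t r i"
  using assms(2)
proof (induction l)
  case (Cons j l)
  then have j: "j \<in> {1..r}" "set l \<subseteq> {1..r}" by auto
  have "gen_t r i \<otimes> a_prod (j # l) k = gen_a r j [^] (if i = j then - k j else k j) \<otimes> (gen_t r i \<otimes> a_prod l k)"
    using assms j by (simp add: gen_t_mult_gen_a_pow flip: m_assoc)
  then show ?case
    using assms j Cons.IH by (auto simp: m_assoc)
qed (use assms in simp)

lemma gen_t_mult_t_prod:
  assumes "i \<in> set l" "distinct l" "set l \<subseteq> {1..r}"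
  shows "gen_t r i \<otimes> t_prod l e = t_prod l (\<lambda>j. if j = i then \<not> e j else e j)"
  using assms
proof (induction l)
  case (Cons j l)
  show ?case
  proof (cases "j = i")
    case True
    with Cons.prems have "i \<notin> set l" "i \<in> {1..r}" "set l \<subseteq> {1..r}" by auto
    moreover from \<open>i \<notin> set l\<close> have "t_prod l (\<lambda>j. if j = i then \<not> e j else e j) = t_prod l e"
      by (intro t_prod_cong) auto
    ultimately show ?thesis
      using True by (simp add: gen_t_square m_assoc[symmetric])
  next
    case False
    with Cons.prems have ij: "i \<in> {1..r}" "j \<in> {1..r}" "set l \<subseteq> {1..r}" by auto
    then have "gen_t r i \<otimes> t_prod (j # l) e = (if e j then gen_t r j else \<one>) \<otimes> (gen_t r i \<otimes> t_prod l e)"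
      by (simp add: gen_t_commute flip: m_assoc)
    with Cons False show ?thesis
      by simp
  qed
qed simp

lemma normal_form_letter:
  assumes "fst x \<in> gens r"
  shows "cl [x] \<otimes> normal_form p = normal_form (letter_coord x \<otimes>\<^bsub>dinf_power r\<^esub> p)"
proof -
  obtain b i c where x: "x = ((b, i), c)" by (metis prod.collapse)
  then have i: "i \<in> {1..r}" using assms by simp
  show ?thesis
  proof (cases b)
    case False
    define z :: int where "z = (if c then -1 else 1)"
    have "cl [x] = gen_a r i [^] z"
      using assms by (simp add: class_letter x False z_def)
    moreover have "letter_coord x \<otimes>\<^bsub>dinf_power r\<^esub> p = (\<lambda>j. if j = i then z + fst p j else fst p j, snd p)"
      by (auto simp: letter_coord_def x False z_def fun_eq_iff)
    ultimately show ?thesis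
      using i by (simp add: normal_form_def gen_a_pow_mult_a_prod m_assoc[symmetric])
  next
    case True
    have "cl [x] = gen_t r i"
      using assms by (simp add: class_letter x True)
    moreover have "letter_coord x \<otimes>\<^bsub>dinf_power r\<^esub> p
        = (\<lambda>j. if j = i then - fst p j else fst p j, \<lambda>j. if j = i then \<not> snd p j else snd p j)"
      by (auto simp: letter_coord_def x True fun_eq_iff)
    moreover have "gen_t r i \<otimes> t_prod gen_indices (snd p)
        = t_prod gen_indices (\<lambda>j. if j = i then \<not> snd p j else snd p j)"
      using i by (simp add: gen_t_mult_t_prod)
    ultimately show ?thesis
      using i by (simp add: normal_form_def gen_t_mult_a_prod flip: m_assoc) (simp add: m_assoc)
  qed
qed

lemma coord_hom: "coord r \<in> hom G (dinf_power r)"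
  using coord_pres.presented_lift_hom by (simp add: coord_def G_eq Gr_def)

sublocale coord: group_hom G "dinf_power r" "coord r"
  using coord_hom group_dinf_power by unfold_locales auto

lemma coord_class: "w \<in> words_on (gens r) \<Longrightarrow> coord r (cl w) = listprod (dinf_power r) (map letter_coord w)"
  by (simp add: coord_def coord_pres.presented_lift_class)

lemma a_prod_zero: "set l \<subseteq> {1..r} \<Longrightarrow> a_prod l (\<lambda>_. 0) = \<one>"
  by (induction l) auto

lemma t_prod_False: "set l \<subseteq> {1..r} \<Longrightarrow> t_prod l (\<lambda>_. False) = \<one>"
  by (induction l) auto

lemma normal_form_listprod:
  "w \<in> words_on (gens r) \<Longrightarrow> normal_form (listprod (dinf_power r) (map letter_coord w)) = cl w"
proof (induction w)
  case Nil
  then show ?case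
    by (simp add: normal_form_def a_prod_zero t_prod_False class_Nil)
next
  case (Cons x w)
  then show ?case
    using normal_form_letter[of x "listprod (dinf_power r) (map letter_coord w)"] class_append[of "[x]" w]
    by (simp del: dinf_power_simps)
qed

lemma normal_form_coord: "x \<in> carrier G \<Longrightarrow> normal_form (coord r x) = x"
  by (auto simp: carrier_eq coord_class normal_form_listprod)

lemma coord_gen_a: "i \<in> {1..r} \<Longrightarrow> coord r (gen_a r i) = (\<lambda>j. if j = i then 1 else 0, \<lambda>_. False)"
  by (simp flip: class_la add: coord_class letter_coord_def la_def)

lemma coord_gen_a_pow:
  "i \<in> {1..r} \<Longrightarrow> coord r (gen_a r i [^] z) = (\<lambda>j. if j = i then z else 0, \<lambda>_. False)"
  by (simp add: coord.hom_int_pow coord_gen_a int_pow_dinf_power_translation carrier_dinf_power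
      if_distrib cong: if_cong)

lemma coord_a_prod:
  "distinct l \<Longrightarrow> set l \<subseteq> {1..r} \<Longrightarrow> coord r (a_prod l k) = (\<lambda>j. if j \<in> set l then k j else 0, \<lambda>_. False)"
  by (induction l) (auto simp: coord_gen_a_pow fun_eq_iff)

lemma coord_gen_t: "i \<in> {1..r} \<Longrightarrow> coord r (gen_t r i) = (\<lambda>_. 0, \<lambda>j. j = i)"
  by (simp flip: class_lt add: coord_class letter_coord_def lt_def fun_eq_iff)

lemma coord_t_prod:
  "distinct l \<Longrightarrow> set l \<subseteq> {1..r} \<Longrightarrow> coord r (t_prod l e) = (\<lambda>_. 0, \<lambda>j. j \<in> set l \<and> e j)"
proof (induction l)
  case (Cons i l)
  then have "coord r (if e i then gen_t r i else \<one>) = (\<lambda>_. 0, \<lambda>j. j = i \<and> e i)"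
    by (auto simp: coord_gen_t)
  with Cons show ?case
    by (auto simp: fun_eq_iff)
qed simp

lemma coord_normal_form: "p \<in> carrier (dinf_power r) \<Longrightarrow> coord r (normal_form p) = p"
  by (auto simp: normal_form_def coord_a_prod coord_t_prod carrier_dinf_power prod_eq_iff fun_eq_iff)

lemma coord_iso: "coord r \<in> iso G (dinf_power r)"
proof (rule isoI[OF coord_hom])
  show "bij_betw (coord r) (carrier G) (carrier (dinf_power r))"
    by (rule bij_betw_byWitness[where f' = normal_form])
      (auto simp: normal_form_coord coord_normal_form)
qed

lemma coord_eq_iff: "x \<in> carrier G \<Longrightarrow> y \<in> carrier G \<Longrightarrow> coord r x = coord r y \<longleftrightarrow> x = y"
  using coord_iso by (auto simp: iso_def bij_betw_def dest: inj_onD)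

section \<open>A free abelian subgroup of finite index\<close>

definition transl_subgroup :: "(bool \<times> nat) word set set" where
  "transl_subgroup = {x \<in> carrier G. snd (coord r x) = (\<lambda>_. False)}"

lemma subgroup_transl_subgroup: "subgroup transl_subgroup G"
  by (rule subgroup.intro) (auto simp: transl_subgroup_def inv_dinf_power)

lemma finite_rcosets_transl_subgroup: "finite (rcosets transl_subgroup)"
proof -
  let ?E = "{e :: nat \<Rightarrow> bool. \<forall>i. i \<notin> {1..r} \<longrightarrow> \<not> e i}"
  have "finite ?E"
  proof (rule finite_subset)
    show "?E \<subseteq> (\<lambda>S i. i \<in> S) ` Pow {1..r}"
    proof
      fix e assume "e \<in> ?E"
      then have "{i. e i} \<in> Pow {1..r}" "e = (\<lambda>i. i \<in> {i. e i})" by auto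
      then show "e \<in> (\<lambda>S i. i \<in> S) ` Pow {1..r}" by blast
    qed
  qed simp
  moreover have "rcosets transl_subgroup \<subseteq> (\<lambda>e. transl_subgroup #> normal_form (\<lambda>_. 0, e)) ` ?E"
  proof
    fix C assume "C \<in> rcosets transl_subgroup"
    then obtain x where x: "x \<in> carrier G" "C = transl_subgroup #> x"
      by (auto simp: RCOSETS_def)
    define k where "k = fst (coord r x)"
    define e where "e = snd (coord r x)"
    have k: "(k, \<lambda>_. False) \<in> carrier (dinf_power r)" and e: "(\<lambda>_. 0, e) \<in> carrier (dinf_power r)"
      using coord.hom_closed[OF x(1)] by (auto simp: carrier_dinf_power k_def e_def)
    have "x = normal_form (k, \<lambda>_. False) \<otimes> normal_form (\<lambda>_. 0, e)"
      using x k e by (simp add: coord_eq_iff[symmetric] coord_normal_form k_def e_def)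
    moreover have "normal_form (k, \<lambda>_. False) \<in> transl_subgroup"
      using k by (simp add: transl_subgroup_def coord_normal_form)
    ultimately have "C = transl_subgroup #> normal_form (\<lambda>_. 0, e)"
      using x subgroup_transl_subgroup
      by (metis coset_join2 coset_mult_assoc normal_form_closed subgroup.subset)
    moreover have "e \<in> ?E"
      using e by (simp add: carrier_dinf_power)
    ultimately show "C \<in> (\<lambda>e. transl_subgroup #> normal_form (\<lambda>_. 0, e)) ` ?E"
      by blast
  qed
  ultimately show ?thesis
    by (meson finite_imageI finite_subset)
qed

definition transl_coord :: "(bool \<times> nat) word set \<Rightarrow> nat \<Rightarrow>\<^sub>0 int" where
  "transl_coord x = Abs_poly_mapping (\<lambda>j. if j < r then fst (coord r x) (Suc j) else 0)"

lemma lookup_transl_coord: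
  "Poly_Mapping.lookup (transl_coord x) = (\<lambda>j. if j < r then fst (coord r x) (Suc j) else 0)"
proof -
  have "finite {j. (if j < r then fst (coord r x) (Suc j) else 0) \<noteq> 0}"
    by (rule finite_subset[of _ "{..<r}"]) auto
  then show ?thesis
    by (simp add: transl_coord_def)
qed

lemma keys_transl_coord: "Poly_Mapping.keys (transl_coord x) \<subseteq> {..<r}"
  by (auto simp: in_keys_iff lookup_transl_coord split: if_splits)

lemma transl_subgroup_iso: "G\<lparr>carrier := transl_subgroup\<rparr> \<cong> free_Abelian_group {..<r}"
proof (rule is_isoI, rule isoI)
  show "transl_coord \<in> hom (G\<lparr>carrier := transl_subgroup\<rparr>) (free_Abelian_group {..<r})"
    by (rule homI)
      (auto simp: transl_subgroup_def free_Abelian_group_def lookup_add lookup_transl_coord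
        in_keys_iff intro!: poly_mapping_eqI split: if_splits)
  define from_lookup :: "(nat \<Rightarrow>\<^sub>0 int) \<Rightarrow> (bool \<times> nat) word set" where
    "from_lookup c = normal_form (\<lambda>i. if i \<in> {1..r} then Poly_Mapping.lookup c (i - 1) else 0, \<lambda>_. False)"
    for c
  have "from_lookup (transl_coord x) = x" if "x \<in> transl_subgroup" for x
  proof -
    have "(\<lambda>i. if i \<in> {1..r} then Poly_Mapping.lookup (transl_coord x) (i - 1) else 0, \<lambda>_. False) = coord r x"
      using that coord.hom_closed[of x]
      by (auto simp: transl_subgroup_def lookup_transl_coord carrier_dinf_power prod_eq_iff fun_eq_iff)
    then show ?thesis
      using that by (simp add: from_lookup_def transl_subgroup_def normal_form_coord)
  qed
  moreover have "transl_coord (from_lookup c) = c" "from_lookup c \<in> transl_subgroup"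
    if "c \<in> carrier (free_Abelian_group {..<r})" for c
    using that
    by (auto simp: from_lookup_def transl_subgroup_def coord_normal_form carrier_dinf_power
        lookup_transl_coord free_Abelian_group_def in_keys_iff intro!: poly_mapping_eqI)
  ultimately show "bij_betw transl_coord (carrier (G\<lparr>carrier := transl_subgroup\<rparr>))
      (carrier (free_Abelian_group {..<r}))"
    by (intro bij_betw_byWitness[where f' = from_lookup]) (auto simp: keys_transl_coord)
qed

lemma virtually_abelian_rank_Gr: "virtually_abelian_rank G r"
  unfolding virtually_abelian_rank_def
  using subgroup_transl_subgroup finite_rcosets_transl_subgroup transl_subgroup_iso by blast

section \<open>The derived subgroup\<close>

lemma gen_a_square_commutator:
  assumes "i \<in> {1..r}"
  shows "gen_a r i \<otimes> gen_a r i = gen_a r i \<otimes> gen_t r i \<otimes> inv gen_a r i \<otimes> inv gen_t r i"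
  using assms
  by (simp add: coord_eq_iff[symmetric] coord_gen_a coord_gen_t inv_dinf_power carrier_dinf_power)
    (auto simp: fun_eq_iff)

lemma a_prod_double_in_generate:
  assumes "set l \<subseteq> {1..r}"
  shows "a_prod l (\<lambda>i. 2 * k i) \<in> generate G {gen_a r i \<otimes> gen_a r i | i. i \<in> {1..r}}"
  using assms
proof (induction l)
  case (Cons i l)
  then have i: "i \<in> {1..r}" by simp
  have "gen_a r i \<otimes> gen_a r i = gen_a r i [^] (2::int)"
    using i int_pow_mult[of "gen_a r i" 1 1] by simp
  then have "gen_a r i [^] (2 * k i) = (gen_a r i \<otimes> gen_a r i) [^] k i"
    using i by (simp add: int_pow_pow)
  also have "\<dots> \<in> generate G {gen_a r i \<otimes> gen_a r i}"
    using i by (subst generate_pow) auto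
  also have "\<dots> \<subseteq> generate G {gen_a r i \<otimes> gen_a r i | i. i \<in> {1..r}}"
    using i by (intro mono_generate) auto
  finally show ?case
    using Cons by (auto intro: generate.eng)
qed (simp add: generate.one)

lemma commutator_eq_a_prod:
  assumes "x \<in> carrier G" "y \<in> carrier G"
  shows "x \<otimes> y \<otimes> inv x \<otimes> inv y = a_prod gen_indices (\<lambda>i. 2 * ((if snd (coord r y) i then fst (coord r x) i else 0)
    - (if snd (coord r x) i then fst (coord r y) i else 0)))"
proof -
  have "coord r (x \<otimes> y \<otimes> inv x \<otimes> inv y) = (\<lambda>i. 2 * ((if snd (coord r y) i then fst (coord r x) i else 0)
      - (if snd (coord r x) i then fst (coord r y) i else 0)), \<lambda>_. False)"
    using assms by (simp only: coord.hom_mult coord.hom_inv coord.hom_closed m_closed inv_closed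
        commutator_dinf_power)
  then show ?thesis
    using assms coord.hom_closed[of x] coord.hom_closed[of y]
    by (simp add: coord_eq_iff[symmetric] coord_a_prod carrier_dinf_power fun_eq_iff
        del: coord.hom_mult coord.hom_inv)
qed

lemma derived_Gr: "derived G (carrier G) = generate G {gen_a r i \<otimes> gen_a r i | i. i \<in> {1..r}}"
  (is "_ = generate G ?Y")
proof
  show "derived G (carrier G) \<subseteq> generate G ?Y"
    unfolding derived_def
  proof (rule generate_subgroup_incl)
    show "subgroup (generate G ?Y) G"
      by (intro generate_is_subgroup) auto
    show "derived_set G (carrier G) \<subseteq> generate G ?Y"
    proof
      fix c
      assume "c \<in> derived_set G (carrier G)"
      then obtain x y where "x \<in> carrier G" "y \<in> carrier G" "c = x \<otimes> y \<otimes> inv x \<otimes> inv y"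
        by blast
      then show "c \<in> generate G ?Y"
        by (simp only: commutator_eq_a_prod a_prod_double_in_generate set_gen_indices order_refl)
    qed
  qed
next
  show "generate G ?Y \<subseteq> derived G (carrier G)"
  proof (rule generate_subgroup_incl)
    show "subgroup (derived G (carrier G)) G"
      by (rule derived_is_subgroup) simp
    show "?Y \<subseteq> derived G (carrier G)"
    proof
      fix y assume "y \<in> ?Y"
      then obtain i where i: "i \<in> {1..r}" "y = gen_a r i \<otimes> gen_a r i" by blast
      then have "y \<in> derived_set G (carrier G)"
        by (intro UN_I[of "gen_a r i"] UN_I[of "gen_t r i"])
          (simp_all add: gen_a_square_commutator del: inv_gen_t)
      then show "y \<in> derived G (carrier G)"
        unfolding derived_def by (rule generate.incl)
    qed
  qed
qed

section \<open>Automorphisms permute the squares of the generators\<close>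

lemma coord_conj_transl:
  assumes "x \<in> transl_subgroup" "g \<in> carrier G"
  shows "coord r (g \<otimes> x \<otimes> inv g)
    = (\<lambda>l. if snd (coord r g) l then - fst (coord r x) l else fst (coord r x) l, \<lambda>_. False)"
  using assms by (auto simp: transl_subgroup_def inv_dinf_power fun_eq_iff)

lemma at_most_two_conjugates_gen_a_square:
  assumes "i \<in> {1..r}"
  shows "at_most_two_conjugates G (gen_a r i [^] (2::int))"
proof -
  let ?x = "gen_a r i [^] (2::int)"
  have x: "?x \<in> transl_subgroup"
    using assms by (simp add: transl_subgroup_def coord_gen_a_pow)
  have "g \<otimes> ?x \<otimes> inv g = gen_a r i [^] (if snd (coord r g) i then -2 else 2 :: int)"
    if "g \<in> carrier G" for g
  proof -
    have "coord r (g \<otimes> ?x \<otimes> inv g) = coord r (gen_a r i [^] (if snd (coord r g) i then -2 else 2 :: int))"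
      using assms by (simp only: coord_conj_transl[OF x that]) (auto simp: coord_gen_a_pow fun_eq_iff)
    then show ?thesis
      using that assms by (simp add: coord_eq_iff del: coord.hom_mult coord.hom_inv)
  qed
  then show ?thesis
    unfolding at_most_two_conjugates_def by auto
qed

lemma square_with_two_conjugates_eq_gen_a_pow:
  assumes h: "h \<in> carrier G" and nontrivial: "h \<otimes> h \<noteq> \<one>"
    and two_conjugates: "at_most_two_conjugates G (h \<otimes> h)"
  shows "\<exists>j\<in>{1..r}. \<exists>m::int. m \<noteq> 0 \<and> h \<otimes> h = gen_a r j [^] (2 * m)"
proof -
  define x where "x = h \<otimes> h"
  define u where "u j = (if snd (coord r h) j then 0 else fst (coord r h) j)" for j
  have x_closed: "x \<in> carrier G"
    using h by (simp add: x_def)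
  have u_outside: "u j = 0" if "j \<notin> {1..r}" for j
    using coord.hom_closed[OF h] that by (simp add: u_def carrier_dinf_power)
  have coord_x: "coord r x = (\<lambda>j. 2 * u j, \<lambda>_. False)"
    using h by (auto simp: x_def u_def fun_eq_iff)
  then have x_transl: "x \<in> transl_subgroup"
    using x_closed by (simp add: transl_subgroup_def)
  obtain j0 where j0: "j0 \<in> {1..r}" "u j0 \<noteq> 0"
  proof -
    have "coord r x \<noteq> coord r \<one>"
      using x_closed nontrivial by (simp only: coord_eq_iff one_closed x_def) simp
    then obtain j where "u j \<noteq> 0"
      by (auto simp: coord_x fun_eq_iff)
    then show ?thesis
      using that u_outside by blast
  qed
  let ?c = "\<lambda>j. gen_t r j \<otimes> x \<otimes> inv gen_t r j"
  have conj: "fst (coord r (?c j)) l = (if l = j then - 2 * u l else 2 * u l)"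
    if "j \<in> {1..r}" for j l
    using that by (simp only: coord_conj_transl[OF x_transl gen_t_closed[OF that]])
      (simp add: coord_gen_t coord_x)
  \<comment> \<open>Conjugation by \<open>t\<^sub>j\<close> negates the \<open>j\<close>-th coordinate, so two nonzero coordinates would
    give three distinct conjugates.\<close>
  have u_single: "u j = 0" if j: "j \<in> {1..r}" "j \<noteq> j0" for j
  proof (rule ccontr)
    assume "u j \<noteq> 0"
    then have "fst (coord r (?c j0)) j0 \<noteq> fst (coord r x) j0"
      "fst (coord r (?c j)) j \<noteq> fst (coord r x) j"
      "fst (coord r (?c j0)) j0 \<noteq> fst (coord r (?c j)) j0"
      using conj[OF j0(1)] conj[OF j(1)] j j0 by (simp_all add: coord_x del: coord.hom_mult coord.hom_inv)
    then have "?c j0 \<noteq> x" "?c j \<noteq> x" "?c j0 \<noteq> ?c j"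
      by metis+
    then show False
      using two_conjugates j(1) j0(1) unfolding at_most_two_conjugates_def x_def
      by (meson gen_t_closed)
  qed
  have "x = gen_a r j0 [^] (2 * u j0)"
    using x_closed j0 u_single u_outside
    by (simp add: coord_eq_iff[symmetric] coord_gen_a_pow coord_x) (auto simp: fun_eq_iff)
  then show ?thesis
    using j0 unfolding x_def by blast
qed

lemma gen_a_pow_inj:
  assumes "i \<in> {1..r}" "j \<in> {1..r}" "z \<noteq> 0" "gen_a r i [^] (z::int) = gen_a r j [^] (w::int)"
  shows "j = i \<and> w = z"
proof -
  have "fst (coord r (gen_a r i [^] z)) i = fst (coord r (gen_a r j [^] w)) i"
    using assms(4) by (rule arg_cong)
  then have "z = (if i = j then w else 0)"
    using assms(1,2) by (simp add: coord_gen_a_pow)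
  with assms(3) show ?thesis
    by (simp split: if_splits)
qed

lemma gen_a_square_ne_one: "i \<in> {1..r} \<Longrightarrow> gen_a r i \<otimes> gen_a r i \<noteq> \<one>"
  using gen_a_pow_inj[of i i 2 0] int_pow_mult[of "gen_a r i" 1 1] by auto

lemma aut_gen_a_square:
  assumes \<phi>: "\<phi> \<in> iso G G" and i: "i \<in> {1..r}"
  shows "\<exists>j\<in>{1..r}. \<exists>m::int. m \<noteq> 0 \<and> \<phi> (gen_a r i [^] (2::int)) = gen_a r j [^] (2 * m)"
proof -
  interpret aut: group_hom G G \<phi>
    using \<phi> by (intro group_hom.intro group_hom_axioms.intro) (simp_all add: iso_iff)
  have sq: "gen_a r i [^] (2::int) = gen_a r i \<otimes> gen_a r i"
    using i int_pow_mult[of "gen_a r i" 1 1] by simp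
  have "inj_on \<phi> (carrier G)"
    using \<phi> by (simp add: iso_def bij_betw_def)
  then have "\<phi> (gen_a r i \<otimes> gen_a r i) \<noteq> \<phi> \<one>"
    using i gen_a_square_ne_one[OF i] by (simp add: inj_on_eq_iff del: aut.hom_mult aut.hom_one)
  then have "\<phi> (gen_a r i \<otimes> gen_a r i) \<noteq> \<one>"
    by simp
  moreover have "at_most_two_conjugates G (\<phi> (gen_a r i \<otimes> gen_a r i))"
    using at_most_two_conjugates_gen_a_square[OF i] i unfolding sq
    by (intro iso_at_most_two_conjugates[OF is_group is_group \<phi>]) simp_all
  ultimately show ?thesis
    using i square_with_two_conjugates_eq_gen_a_pow[of "\<phi> (gen_a r i)"] by (simp add: sq)
qed

lemma aut_permutes_gen_a_squares:
  assumes \<phi>: "\<phi> \<in> iso G G"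
  obtains \<sigma> m where "inj_on \<sigma> {1..r}"
    and "\<And>i. i \<in> {1..r} \<Longrightarrow> \<sigma> i \<in> {1..r} \<and> (m i = 1 \<or> m i = (-1::int)) \<and>
      \<phi> (gen_a r i [^] (2::int)) = gen_a r (\<sigma> i) [^] (2 * m i)"
proof -
  define \<psi> where "\<psi> = inv_into (carrier G) \<phi>"
  have \<psi>: "\<psi> \<in> iso G G"
    unfolding \<psi>_def using \<phi> by (rule iso_set_sym)
  interpret \<psi>: group_hom G G \<psi>
    using \<psi> by (intro group_hom.intro group_hom_axioms.intro) (simp_all add: iso_iff)
  obtain \<sigma> m where \<sigma>: "\<And>i. i \<in> {1..r} \<Longrightarrow>
      \<sigma> i \<in> {1..r} \<and> m i \<noteq> (0::int) \<and> \<phi> (gen_a r i [^] (2::int)) = gen_a r (\<sigma> i) [^] (2 * m i)"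
    using aut_gen_a_square[OF \<phi>] by metis
  obtain \<sigma>' m' where \<sigma>': "\<And>i. i \<in> {1..r} \<Longrightarrow>
      \<sigma>' i \<in> {1..r} \<and> m' i \<noteq> (0::int) \<and> \<psi> (gen_a r i [^] (2::int)) = gen_a r (\<sigma>' i) [^] (2 * m' i)"
    using aut_gen_a_square[OF \<psi>] by metis
  have inverse: "\<sigma>' (\<sigma> i) = i \<and> m i * m' (\<sigma> i) = 1" if i: "i \<in> {1..r}" for i
  proof -
    have "gen_a r i [^] (2::int) = \<psi> (\<phi> (gen_a r i [^] (2::int)))"
      using \<phi> i by (simp add: \<psi>_def iso_iff)
    also have "\<dots> = \<psi> ((gen_a r (\<sigma> i) [^] (2::int)) [^] m i)"
      using \<sigma>[OF i] by (simp add: int_pow_pow)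
    also have "\<dots> = \<psi> (gen_a r (\<sigma> i) [^] (2::int)) [^] m i"
      using \<sigma>[OF i] by (intro \<psi>.hom_int_pow) simp
    also have "\<dots> = gen_a r (\<sigma>' (\<sigma> i)) [^] (2 * (m' (\<sigma> i) * m i))"
      using \<sigma>[OF i] \<sigma>'[of "\<sigma> i"] by (simp only: int_pow_pow gen_a_closed mult.assoc)
    finally have "\<sigma>' (\<sigma> i) = i \<and> 2 * (m' (\<sigma> i) * m i) = 2"
      by (rule gen_a_pow_inj[rotated 3]) (use i \<sigma>[OF i] \<sigma>'[of "\<sigma> i"] in simp_all)
    then show ?thesis
      by (simp add: mult.commute)
  qed
  show ?thesis
  proof (rule that)
    show "inj_on \<sigma> {1..r}"
      by (metis inj_onI inverse)
    fix i
    assume i: "i \<in> {1..r}"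
    then have "m i = 1 \<or> m i = -1"
      using inverse[OF i] by (auto simp: zmult_eq_1_iff)
    then show "\<sigma> i \<in> {1..r} \<and> (m i = 1 \<or> m i = -1) \<and> \<phi> (gen_a r i [^] (2::int)) = gen_a r (\<sigma> i) [^] (2 * m i)"
      using \<sigma>[OF i] by blast
  qed
qed

lemma coord_listprod_gen_a_pow:
  assumes "distinct l" "\<And>i. i \<in> set l \<Longrightarrow> \<sigma> i \<in> {1..r}"
  shows "coord r (listprod G (map (\<lambda>i. gen_a r (\<sigma> i) [^] (w i :: int)) l))
    = (\<lambda>j. \<Sum>i\<in>set l. if \<sigma> i = j then w i else 0, \<lambda>_. False)"
  using assms
proof (induction l)
  case (Cons i l)
  then have "listprod G (map (\<lambda>i. gen_a r (\<sigma> i) [^] w i) l) \<in> carrier G"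
    by (intro listprod_closed) fastforce
  with Cons show ?case
    by (auto simp: coord_gen_a_pow fun_eq_iff)
qed simp

lemma aut_a_prod_even:
  assumes \<phi>: "\<phi> \<in> iso G G" and "set l \<subseteq> {1..r}"
    and \<sigma>: "\<And>i. i \<in> {1..r} \<Longrightarrow> \<sigma> i \<in> {1..r} \<and> \<phi> (gen_a r i [^] (2::int)) = gen_a r (\<sigma> i) [^] (2 * m i)"
  shows "\<phi> (a_prod l (\<lambda>i. 2 * z i)) = listprod G (map (\<lambda>i. gen_a r (\<sigma> i) [^] (2 * m i * z i)) l)"
proof -
  interpret aut: group_hom G G \<phi>
    using \<phi> by (intro group_hom.intro group_hom_axioms.intro) (simp_all add: iso_iff)
  have image: "\<phi> (gen_a r i [^] (2 * z i)) = gen_a r (\<sigma> i) [^] (2 * m i * z i)" if "i \<in> {1..r}" for i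
  proof -
    have "gen_a r i [^] (2 * z i) = (gen_a r i [^] (2::int)) [^] z i"
      using that by (simp add: int_pow_pow)
    then have "\<phi> (gen_a r i [^] (2 * z i)) = \<phi> (gen_a r i [^] (2::int)) [^] z i"
      using that by (simp add: aut.hom_int_pow)
    also have "\<dots> = gen_a r (\<sigma> i) [^] (2 * m i * z i)"
      using \<sigma>[OF that] by (simp add: int_pow_pow)
    finally show ?thesis .
  qed
  have "\<phi> (a_prod l (\<lambda>i. 2 * z i)) = listprod G (map (\<lambda>i. \<phi> (gen_a r i [^] (2 * z i))) l)"
    using assms(2) by (subst a_prod_def, subst aut.hom_listprod) (auto simp: comp_def)
  also have "\<dots> = listprod G (map (\<lambda>i. gen_a r (\<sigma> i) [^] (2 * m i * z i)) l)"
    using assms(2) image by (intro arg_cong[where f = "listprod G"] map_cong) auto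
  finally show ?thesis .
qed

definition a_square_prod :: "(nat \<Rightarrow> nat) \<Rightarrow> (bool \<times> nat) word set" where
  "a_square_prod k = a_prod gen_indices (\<lambda>i. 2 * int (k i))"

lemma a_square_prod_closed [simp]: "a_square_prod k \<in> carrier G"
  by (simp add: a_square_prod_def)

lemma aut_a_square_prod_blocks:
  assumes \<phi>: "\<phi> \<in> iso G G" and eq: "\<phi> (a_square_prod k) = a_square_prod k'"
    and k: "\<And>i. i \<in> {1..r} \<Longrightarrow> k i \<in> {i * (n + 1) .. i * (n + 1) + n}"
    and k': "\<And>i. i \<in> {1..r} \<Longrightarrow> k' i \<in> {i * (n + 1) .. i * (n + 1) + n}"
    and i: "i \<in> {1..r}"
  shows "k i = k' i"
proof -
  obtain \<sigma> m where inj: "inj_on \<sigma> {1..r}" and \<sigma>: "\<And>i. i \<in> {1..r} \<Longrightarrow> \<sigma> i \<in> {1..r} \<and>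
      (m i = 1 \<or> m i = (-1::int)) \<and> \<phi> (gen_a r i [^] (2::int)) = gen_a r (\<sigma> i) [^] (2 * m i)"
    using aut_permutes_gen_a_squares[OF \<phi>] by blast
  have "\<phi> (a_square_prod k) = listprod G (map (\<lambda>i. gen_a r (\<sigma> i) [^] (2 * m i * int (k i))) gen_indices)"
    unfolding a_square_prod_def using \<sigma> by (intro aut_a_prod_even[OF \<phi>]) auto
  then have "fst (coord r (a_square_prod k')) (\<sigma> i)
      = (\<Sum>i'\<in>{1..r}. if \<sigma> i' = \<sigma> i then 2 * m i' * int (k i') else 0)"
    using coord_listprod_gen_a_pow[of gen_indices \<sigma>] \<sigma> by (simp add: eq del: coord.hom_mult)
  also have "\<dots> = (\<Sum>i'\<in>{1..r}. if i' = i then 2 * m i' * int (k i') else 0)"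
    using inj i by (intro sum.cong) (auto dest: inj_onD)
  finally have "m i * int (k i) = int (k' (\<sigma> i))"
    using \<sigma>[OF i] i by (simp add: a_square_prod_def coord_a_prod)
  moreover have "0 < k i" "0 < k' (\<sigma> i)"
    using k[OF i] k'[of "\<sigma> i"] i \<sigma>[OF i] by (auto intro: less_le_trans[of 0 "n + 1"])
  ultimately have k_eq: "k' (\<sigma> i) = k i"
    using \<sigma>[OF i] by auto
  then have "\<sigma> i = i"
    using div_eq_of_mem_block[OF k[OF i]] div_eq_of_mem_block[OF k'[of "\<sigma> i"]] \<sigma>[OF i] by simp
  with k_eq show ?thesis
    by simp
qed

section \<open>Automorphic growth\<close>

lemma coord_listprod_bound:
  assumes "T \<subseteq> carrier G" "\<And>x i. x \<in> T \<Longrightarrow> \<bar>fst (coord r x) i\<bar> \<le> int C" "set xs \<subseteq> T"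
  shows "\<bar>fst (coord r (listprod G xs)) i\<bar> \<le> int (C * length xs)"
  using assms(3)
proof (induction xs)
  case (Cons x xs)
  then have x: "x \<in> carrier G" and xs: "listprod G xs \<in> carrier G"
    using assms(1) by auto
  have "\<bar>fst (coord r (listprod G (x # xs))) i\<bar> \<le> \<bar>fst (coord r x) i\<bar> + \<bar>fst (coord r (listprod G xs)) i\<bar>"
    using x xs by (simp add: abs_triangle_ineq abs_triangle_ineq4)
  moreover have "\<bar>fst (coord r x) i\<bar> \<le> int C"
    using Cons.prems by (intro assms(2)) simp
  moreover have "\<bar>fst (coord r (listprod G xs)) i\<bar> \<le> int (C * length xs)"
    using Cons by simp
  ultimately show ?case
    by (simp add: algebra_simps)
qed simp

lemma word_ball_in_box:
  assumes "S \<subseteq> carrier G" "generate G S = carrier G"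
    and bound: "\<And>x i. x \<in> S \<union> m_inv G ` S \<Longrightarrow> \<bar>fst (coord r x) i\<bar> \<le> int C"
  shows "{g \<in> carrier G. word_length G S g \<le> n} \<subseteq> normal_form ` dinf_box r (C * n)"
proof
  fix g
  assume g: "g \<in> {g \<in> carrier G. word_length G S g \<le> n}"
  then obtain xs where xs: "length xs = word_length G S g" "set xs \<subseteq> S \<union> m_inv G ` S" "listprod G xs = g"
    using word_length_witness[OF assms(1)] assms(2) by blast
  have "\<bar>fst (coord r g) i\<bar> \<le> int (C * n)" for i
  proof -
    have "\<bar>fst (coord r (listprod G xs)) i\<bar> \<le> int (C * length xs)"
      by (rule coord_listprod_bound[OF _ bound xs(2)]) (use assms(1) in auto)
    then have "\<bar>fst (coord r g) i\<bar> \<le> int (C * length xs)"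
      unfolding xs(3) .
    moreover have "int (C * length xs) \<le> int (C * n)"
      using g xs(1) by (simp only: of_nat_le_iff mult_le_mono2 mem_Collect_eq)
    ultimately show ?thesis
      by linarith
  qed
  then have "coord r g \<in> dinf_box r (C * n)"
    using g by (simp add: dinf_box_def)
  then show "g \<in> normal_form ` dinf_box r (C * n)"
    using g normal_form_coord by force
qed

lemma coord_bound_exists:
  assumes "finite T" "T \<subseteq> carrier G"
  obtains C where "\<And>x i. x \<in> T \<Longrightarrow> \<bar>fst (coord r x) i\<bar> \<le> int C"
proof
  define C where "C = Max (insert 0 ((\<lambda>(x, i). nat \<bar>fst (coord r x) i\<bar>) ` (T \<times> {1..r})))"
  fix x i
  assume x: "x \<in> T"
  show "\<bar>fst (coord r x) i\<bar> \<le> int C"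
  proof (cases "i \<in> {1..r}")
    case True
    then have "nat \<bar>fst (coord r x) i\<bar> \<le> C"
      unfolding C_def using assms(1) x by (intro Max_ge) auto
    then show ?thesis
      by linarith
  next
    case False
    then show ?thesis
      using coord.hom_closed[of x] x assms(2) by (auto simp: carrier_dinf_power)
  qed
qed

lemma word_ball_subset_box:
  assumes "finite S" "S \<subseteq> carrier G" "generate G S = carrier G"
  obtains C where "\<And>n. {g \<in> carrier G. word_length G S g \<le> n} \<subseteq> normal_form ` dinf_box r (C * n)"
proof -
  obtain C where C: "\<And>x i. x \<in> S \<union> m_inv G ` S \<Longrightarrow> \<bar>fst (coord r x) i\<bar> \<le> int C"
    by (rule coord_bound_exists[of "S \<union> m_inv G ` S"]) (use assms(1,2) in auto)
  have "{g \<in> carrier G. word_length G S g \<le> n} \<subseteq> normal_form ` dinf_box r (C * n)" for n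
    using assms(2,3) C by (rule word_ball_in_box)
  then show ?thesis
    by (rule that)
qed

lemma finite_word_ball:
  assumes "finite S" "S \<subseteq> carrier G" "generate G S = carrier G"
  shows "finite {g \<in> carrier G. word_length G S g \<le> n}"
proof -
  obtain C where "\<And>n. {g \<in> carrier G. word_length G S g \<le> n} \<subseteq> normal_form ` dinf_box r (C * n)"
    using word_ball_subset_box[OF assms] by auto
  then show ?thesis
    by (rule finite_subset) simp
qed

lemma aut_growth_upper:
  assumes "finite S" "S \<subseteq> carrier G" "generate G S = carrier G"
  shows "growth_le (aut_growth G S) (\<lambda>n. n ^ r)"
proof -
  obtain C where ball: "\<And>n. {g \<in> carrier G. word_length G S g \<le> n} \<subseteq> normal_form ` dinf_box r (C * n)"
    using word_ball_subset_box[OF assms] by auto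
  have "aut_growth G S n \<le> (2 * (2 * C + 1)) ^ r * (n + 1) ^ r" for n
  proof -
    have "aut_growth G S n \<le> card {g \<in> carrier G. word_length G S g \<le> n}"
      using finite_word_ball[OF assms] by (rule aut_growth_le_card_ball)
    also have "\<dots> \<le> card (normal_form ` dinf_box r (C * n))"
      using ball by (intro card_mono) auto
    also have "\<dots> \<le> card (dinf_box r (C * n))"
      by (rule card_image_le) simp
    also have "\<dots> \<le> (2 * (C * n) + 1) ^ r * 2 ^ r"
      by (rule card_dinf_box_le)
    also have "\<dots> \<le> ((2 * C + 1) * (n + 1)) ^ r * 2 ^ r"
      by (intro mult_right_mono power_mono) (auto simp: algebra_simps)
    also have "\<dots> = (2 * (2 * C + 1)) ^ r * (n + 1) ^ r"
      by (simp only: power_mult_distrib mult_ac)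
    finally show ?thesis
      by simp
  qed
  then show ?thesis
    by (rule growth_le_powerI)
qed

lemma word_length_a_square_prod:
  assumes "S \<subseteq> carrier G" "generate G S = carrier G"
  shows "word_length G S (a_square_prod k) \<le> (\<Sum>i\<in>{1..r}. 2 * k i * word_length G S (gen_a r i))"
proof -
  have "\<forall>i\<in>{1..r}. \<exists>ws. length ws = word_length G S (gen_a r i) \<and>
      set ws \<subseteq> S \<union> m_inv G ` S \<and> listprod G ws = gen_a r i"
  proof
    fix i
    assume "i \<in> {1..r}"
    then have "gen_a r i \<in> generate G S"
      using assms(2) by simp
    then show "\<exists>ws. length ws = word_length G S (gen_a r i) \<and>
        set ws \<subseteq> S \<union> m_inv G ` S \<and> listprod G ws = gen_a r i"
      by (rule word_length_witness[OF assms(1)]) blast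
  qed
  then obtain w where w: "\<forall>i\<in>{1..r}. length (w i) = word_length G S (gen_a r i) \<and>
      set (w i) \<subseteq> S \<union> m_inv G ` S \<and> listprod G (w i) = gen_a r i"
    by (auto dest!: bchoice)
  have S_closed: "S \<union> m_inv G ` S \<subseteq> carrier G"
    using assms(1) by auto
  define xs where "xs = concat (map (\<lambda>i. concat (replicate (2 * k i) (w i))) gen_indices)"
  have pow: "listprod G (concat (replicate (2 * k i) (w i))) = gen_a r i [^] (2 * int (k i))"
    and closed: "set (w i) \<subseteq> carrier G"
    if "i \<in> {1..r}" for i
  proof -
    have "set (w i) \<subseteq> carrier G"
      using w that S_closed by blast
    then have "listprod G (concat (replicate (2 * k i) (w i))) = listprod G (replicate (2 * k i) (gen_a r i))"
      using w that by (subst listprod_concat) auto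
    also have "\<dots> = gen_a r i [^] (2 * int (k i))"
      using that int_pow_int[where G = G and x = "gen_a r i" and n = "2 * k i"]
      by (simp add: listprod_replicate)
    finally show "listprod G (concat (replicate (2 * k i) (w i))) = gen_a r i [^] (2 * int (k i))" .
    show "set (w i) \<subseteq> carrier G"
      by fact
  qed
  have "listprod G xs = listprod G (map (\<lambda>i. listprod G (concat (replicate (2 * k i) (w i)))) gen_indices)"
    unfolding xs_def by (subst listprod_concat) (auto simp: comp_def intro: subsetD[OF closed])
  also have "\<dots> = a_square_prod k"
    unfolding a_square_prod_def a_prod_def using pow
    by (intro arg_cong[where f = "listprod G"] map_cong) simp_all
  finally have "listprod G xs = a_square_prod k" .
  moreover have "set xs \<subseteq> S \<union> m_inv G ` S"
    unfolding xs_def using w by fastforce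
  moreover have "length xs = (\<Sum>i\<in>{1..r}. 2 * k i * word_length G S (gen_a r i))"
  proof -
    have "length xs = (\<Sum>i\<leftarrow>gen_indices. 2 * k i * length (w i))"
      by (simp add: xs_def length_concat comp_def sum_list_replicate)
    also have "\<dots> = (\<Sum>i\<in>{1..r}. 2 * k i * length (w i))"
      by (simp add: sum_list_distinct_conv_sum_set)
    finally show ?thesis
      using w by simp
  qed
  ultimately show ?thesis
    by (metis word_length_le)
qed

lemma aut_growth_lower:
  assumes "finite S" "S \<subseteq> carrier G" "generate G S = carrier G"
  shows "growth_le (\<lambda>n. n ^ r) (aut_growth G S)"
proof -
  define L where "L = Max ((\<lambda>i. word_length G S (gen_a r i)) ` {1..r} \<union> {0})"
  define c where "c = 2 * r * (r + 1) * L + 1"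
  have "(n + 1) ^ r \<le> aut_growth G S (c * n + c)" for n
  proof -
    let ?blocks = "Pi\<^sub>E {1..r} (\<lambda>i. {i * (n + 1) .. i * (n + 1) + n})"
    have "a_square_prod ` ?blocks \<subseteq> {g \<in> carrier G. word_length G S g \<le> c * n + c}"
    proof safe
      fix k
      assume k: "k \<in> ?blocks"
      have "word_length G S (a_square_prod k) \<le> (\<Sum>i\<in>{1..r}. 2 * k i * word_length G S (gen_a r i))"
        using assms(2,3) by (rule word_length_a_square_prod)
      also have "\<dots> \<le> (\<Sum>i\<in>{1..r}. 2 * ((r + 1) * (n + 1)) * L)"
      proof (rule sum_mono)
        fix i
        assume i: "i \<in> {1..r}"
        have "k i \<le> i * (n + 1) + n"
          using k i by (auto simp: PiE_iff)
        also have "\<dots> \<le> r * (n + 1) + (n + 1)"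
          using i by (intro add_mono mult_right_mono) auto
        finally have "2 * k i \<le> 2 * ((r + 1) * (n + 1))"
          by (simp add: algebra_simps)
        moreover have "word_length G S (gen_a r i) \<le> L"
          unfolding L_def using i by (intro Max_ge) auto
        ultimately show "2 * k i * word_length G S (gen_a r i) \<le> 2 * ((r + 1) * (n + 1)) * L"
          by (rule mult_mono) simp_all
      qed
      also have "\<dots> \<le> c * n + c"
        by (simp add: c_def algebra_simps)
      finally show "word_length G S (a_square_prod k) \<le> c * n + c" .
    qed simp
    moreover have "inj_on (\<lambda>k. aut_orbit G (a_square_prod k)) ?blocks"
    proof (rule inj_onI)
      fix k k'
      assume k: "k \<in> ?blocks" and k': "k' \<in> ?blocks"
        and orbit: "aut_orbit G (a_square_prod k) = aut_orbit G (a_square_prod k')"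
      obtain \<phi> where \<phi>: "\<phi> \<in> iso G G" and eq: "\<phi> (a_square_prod k) = a_square_prod k'"
        using aut_orbit_eqD[OF orbit] by blast
      show "k = k'"
      proof (rule PiE_ext[OF k k'])
        fix i
        assume "i \<in> {1..r}"
        then show "k i = k' i"
          using k k' by (intro aut_a_square_prod_blocks[where n = n, OF \<phi> eq]) (auto simp: PiE_iff)
      qed
    qed
    ultimately have "card ?blocks \<le> aut_growth G S (c * n + c)"
      by (rule card_le_aut_growth[OF finite_word_ball[OF assms]])
    moreover have "card ?blocks = (n + 1) ^ r"
      by (simp add: card_PiE)
    ultimately show ?thesis
      by simp
  qed
  then show ?thesis
    by (intro power_growth_leI[of c]) (simp_all add: c_def)
qed

end

lemma group_Gr: "group (Gr r)"
  by (simp add: Gr_def group_presented_group)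

theorem mainTheorem12:
  fixes r :: nat
  assumes "r \<ge> 1"
  shows "group (Gr r)
    \<and> virtually_abelian_rank (Gr r) r
    \<and> (\<forall>\<Sigma>. finite \<Sigma> \<and> \<Sigma> \<subseteq> carrier (Gr r) \<and> generate (Gr r) \<Sigma> = carrier (Gr r) \<longrightarrow>
          growth_equiv (aut_growth (Gr r) \<Sigma>) (\<lambda>n. n ^ r))
    \<and> derived (Gr r) (carrier (Gr r)) =
        generate (Gr r) {gen_a r i \<otimes>\<^bsub>Gr r\<^esub> gen_a r i | i. i \<in> {1..r}}"
proof -
  \<comment> \<open>The argument also covers \<open>r = 0\<close>.\<close>
  interpret Gr_group "Gr r" r
    by (intro Gr_group.intro Gr_group_axioms.intro group_Gr) simp
  show ?thesis
    using group_Gr virtually_abelian_rank_Gr aut_growth_upper aut_growth_lower derived_Gr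
    by (simp add: growth_equiv_def)
qed

end
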